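(* Let $\nu\in(0,1]$ and $\delta\in(0,1]$. Then $$M_{\delta,\nu}\stackrel{d}{=} Z_{\nu,1}^{-1/\delta}\cdot M_{\delta},$$ where $Z_{\nu,1}$ and $M_\delta$ are independent.
   Context: $\stackrel{d}{=}$ denotes equality in distribution. For $\delta\in(0,1]$, $\nu>0$, $M_{\delta,\nu}$ denotes a nonnegative random variable with Laplace transform $(1+s^{\delta})^{-\nu}$, $s\ge0$, and $M_\delta=M_{\delta,1}$ (Mittag-Leffler distribution, Laplace transform $(1+s^\delta)^{-1}$). For $r\in(0,1)$, $Z_{r,1}=(G_{r,1}+G_{1-r,1})/G_{r,1}$ where $G_{r,1},G_{1-r,1}$ are independent gamma random variables with shapes $r,1-r$ and unit scale (density of $Z_{r,1}$: $\frac{1}{\Gamma(1-r)\Gamma(r)}\frac{\mathbf{1}(z\ge1)}{(z-1)^rz}$); $Z_{1,1}\equiv 1$. *)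

theory Defs
  imports "HOL-Probability.Probability"
begin

text \<open>The law of a nonnegative random variable with Laplace transform
  (1 + s^delta)^(-nu), s >= 0 (the law of M_{delta,nu}).
  Since Laplace transforms on s >= 0 determine laws of nonnegative random
  variables, this characterises the law uniquely.\<close>
definition ml_law :: "real \<Rightarrow> real \<Rightarrow> real measure \<Rightarrow> bool" where
  "ml_law \<delta> \<nu> \<mu> \<longleftrightarrow>
     prob_space \<mu> \<and> sets \<mu> = sets borel \<and> (AE x in \<mu>. 0 \<le> x) \<and>
     (\<forall>s\<ge>0. (\<integral>x. exp (- (s * x)) \<partial>\<mu>) = (1 + s powr \<delta>) powr (- \<nu>))"

definition Z_law :: "real \<Rightarrow> real measure" where
  "Z_law r = (if r = 1 then return borel 1
     else density lborel (\<lambda>z. ennreal (indicator {1..} z /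
            (Gamma (1 - r) * Gamma r * (z - 1) powr r * z))))"

end

theory Submission
  imports Defs
begin

text \<open>Conditionally on \<open>Z = z\<close>, the Laplace transform of \<open>Z\<^sup>-\<^sup>1\<^sup>/\<^sup>\<delta> M\<^sub>\<delta>\<close> at \<open>s\<close> is
  \<open>(1 + s\<^sup>\<delta>/z)\<^sup>-\<^sup>1 = z/(z + t)\<close> with \<open>t = s\<^sup>\<delta>\<close>. Averaging over the density of \<open>Z\<^sub>\<nu>\<^sub>,\<^sub>1\<close>
  gives \<open>\<integral>\<^sub>1\<^sup>\<infinity> (z - 1)\<^sup>-\<^sup>\<nu> / (z + t) dz / (\<Gamma>(\<nu>) \<Gamma>(1 - \<nu>))\<close>, and the substitution
  \<open>z = (1 + t)/u - t\<close> turns this into \<open>(1 + t)\<^sup>-\<^sup>\<nu>\<close> times a complete Beta integral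
  \<open>B(\<nu>, 1 - \<nu>) = \<Gamma>(\<nu>) \<Gamma>(1 - \<nu>)\<close>, i.e. \<open>(1 + s\<^sup>\<delta>)\<^sup>-\<^sup>\<nu>\<close>.\<close>

lemma reciprocal_shift_image:
  fixes t :: real
  assumes "-1 < t"
  shows "(\<lambda>u. (1 + t) / u - t) ` {0<..<1} = {1<..}"
proof
  show "(\<lambda>u. (1 + t) / u - t) ` {0<..<1} \<subseteq> {1<..}"
  proof clarsimp
    fix u :: real
    assume "0 < u" "u < 1"
    then have "u * (1 + t) < 1 * (1 + t)"
      using assms by (intro mult_strict_right_mono) auto
    then show "1 < (1 + t) / u - t"
      using \<open>0 < u\<close> by (simp add: field_simps)
  qed
  show "{1<..} \<subseteq> (\<lambda>u. (1 + t) / u - t) ` {0<..<1}"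
  proof
    fix z :: real
    assume "z \<in> {1<..}"
    then have "(1 + t) / (z + t) \<in> {0<..<1}" and "(1 + t) / ((1 + t) / (z + t)) - t = z"
      using assms by (auto simp: field_simps)
    then show "z \<in> (\<lambda>u. (1 + t) / u - t) ` {0<..<1}"
      by (metis image_eqI)
  qed
qed

lemma powr_reciprocal_substitution:
  fixes c u \<nu> :: real
  assumes "0 < c" "0 < u" "u < 1"
  shows "c / u\<^sup>2 * ((c * (1 - u) / u) powr (- \<nu>) / (c / u))
    = c powr (- \<nu>) * (u powr (\<nu> - 1) * (1 - u) powr (- \<nu>))"
proof -
  have "(c * (1 - u) / u) powr (- \<nu>) = c powr (- \<nu>) * (1 - u) powr (- \<nu>) / u powr (- \<nu>)"
    using assms by (simp add: powr_divide powr_mult)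
  moreover have "u powr (\<nu> - 1) = u powr \<nu> / u" "u powr (- \<nu>) = 1 / u powr \<nu>"
    using assms by (simp_all add: powr_diff powr_minus_divide)
  ultimately show ?thesis
    using assms by (simp add: field_simps power2_eq_square)
qed

lemma has_integral_Ioi_powr_div_linear:
  fixes \<nu> t :: real
  assumes "0 < \<nu>" "\<nu> < 1" "-1 < t"
  shows "((\<lambda>z. (z - 1) powr (- \<nu>) / (z + t)) has_integral
          (1 + t) powr (- \<nu>) * Beta \<nu> (1 - \<nu>)) {1<..}"
proof -
  define c where "c = 1 + t"
  have "c > 0" using assms by (simp add: c_def)
  define f where "f z = (z - 1) powr (- \<nu>) / (z + t)" for z :: real
  define g where "g u = c / u - t" for u :: real
  define B where "B u = c powr (- \<nu>) * (u powr (\<nu> - 1) * (1 - u) powr ((1 - \<nu>) - 1))" for u :: real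
  have B: "(B has_integral c powr (- \<nu>) * Beta \<nu> (1 - \<nu>)) {0<..<1}"
    unfolding B_def[abs_def] using has_integral_mult_right[OF has_integral_Beta_real[of \<nu> "1 - \<nu>"]] assms
    by (simp add: has_integral_Icc_iff_Ioo)
  have g': "(g has_field_derivative - c / u\<^sup>2) (at u within {0<..<1})" if "u \<in> {0<..<1}" for u
    using that unfolding g_def by (auto intro!: derivative_eq_intros simp: power2_eq_square)
  have "inj_on g {0<..<1}"
    using \<open>c > 0\<close> by (auto simp: inj_on_def g_def field_simps)
  have transformed: "\<bar>- c / u\<^sup>2\<bar> * f (g u) = B u" if "u \<in> {0<..<1}" for u
  proof -
    have "g u - 1 = c * (1 - u) / u" "g u + t = c / u"
      using that by (auto simp: g_def c_def field_simps)
    then show ?thesis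
      using that \<open>c > 0\<close> powr_reciprocal_substitution[of c u \<nu>]
      by (simp add: f_def B_def abs_div)
  qed
  have "B absolutely_integrable_on {0<..<1}"
    using B by (intro nonnegative_absolutely_integrable_1) (auto simp: B_def)
  then have "(\<lambda>u. \<bar>- c / u\<^sup>2\<bar> * f (g u)) absolutely_integrable_on {0<..<1}"
    by (rule absolutely_integrable_spike[OF _ negligible_empty]) (metis Diff_empty transformed)
  moreover have "integral {0<..<1} (\<lambda>u. \<bar>- c / u\<^sup>2\<bar> * f (g u)) = c powr (- \<nu>) * Beta \<nu> (1 - \<nu>)"
  proof -
    have "integral {0<..<1} (\<lambda>u. \<bar>- c / u\<^sup>2\<bar> * f (g u)) = integral {0<..<1} B"
      by (rule integral_cong) (rule transformed)
    then show ?thesis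
      using integral_unique[OF B] by simp
  qed
  ultimately have "f absolutely_integrable_on g ` {0<..<1} \<and>
      integral (g ` {0<..<1}) f = c powr (- \<nu>) * Beta \<nu> (1 - \<nu>)"
    by (subst has_absolute_integral_change_of_variables_1'[OF _ g' \<open>inj_on g _\<close>, symmetric]) auto
  moreover have "g ` {0<..<1} = {1<..}"
    using reciprocal_shift_image[OF assms(3)] by (simp add: g_def[abs_def] c_def)
  ultimately show ?thesis
    unfolding f_def c_def
    by (metis absolutely_integrable_on_def has_integral_integrable_integral)
qed

lemma AE_Z_law_ge_one: "AE z in Z_law r. 1 \<le> z"
  unfolding Z_law_def by (auto simp: AE_density AE_return indicator_def)

lemma nn_integral_Z_law_ratio:
  fixes r t :: real
  assumes "0 < r" "r \<le> 1" "-1 < t"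
  shows "(\<integral>\<^sup>+z. ennreal (z / (z + t)) \<partial>Z_law r) = ennreal ((1 + t) powr (- r))"
proof (cases "r = 1")
  case True
  then show ?thesis
    using assms by (simp add: Z_law_def nn_integral_return powr_minus divide_simps)
next
  case False
  with assms have "r < 1" by simp
  define C where "C = Gamma (1 - r) * Gamma r"
  have "C > 0" using assms \<open>r < 1\<close> by (simp add: C_def)
  define F where "F z = (z - 1) powr (- r) / (z + t) / C" for z :: real
  have "Beta r (1 - r) = C"
    by (simp add: Beta_def C_def)
  then have F_integral: "(F has_integral (1 + t) powr (- r)) {1<..}"
    using has_integral_divide[OF has_integral_Ioi_powr_div_linear[OF assms(1) \<open>r < 1\<close> assms(3)], of C]
      \<open>C > 0\<close> unfolding F_def[abs_def] by simp
  have F_nonneg: "0 \<le> F z" if "z \<in> {1<..}" for z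
    using that assms \<open>C > 0\<close> by (simp add: F_def)
  have density_times_ratio: "ennreal (indicator {1..} z / (C * (z - 1) powr r * z)) * ennreal (z / (z + t))
      = ennreal (F z) * indicator {1<..} z" for z :: real
  proof (cases "1 < z")
    case True
    then have "indicator {1..} z / (C * (z - 1) powr r * z) * (z / (z + t)) = F z"
      using assms \<open>C > 0\<close> by (simp add: F_def powr_minus divide_simps)
    then show ?thesis
      using True assms \<open>C > 0\<close> by (simp add: ennreal_mult'[symmetric] indicator_def)
  next
    case False
    then show ?thesis
      by (cases "z = 1") (auto simp: indicator_def)
  qed
  have "(\<integral>\<^sup>+z. ennreal (z / (z + t)) \<partial>Z_law r) = (\<integral>\<^sup>+z. ennreal (F z) * indicator {1<..} z \<partial>lborel)"
    using False by (simp add: Z_law_def C_def[symmetric] nn_integral_density density_times_ratio)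
  also have "\<dots> = ennreal ((1 + t) powr (- r))"
    by (rule nn_integral_has_integral_lebesgue'[OF F_nonneg F_integral])
  finally show ?thesis .
qed

lemma nn_integral_exp_neg_eq_integral:
  fixes M :: "real measure" and s :: real
  assumes "prob_space M" "sets M = sets borel" "AE x in M. 0 \<le> x" "0 \<le> s"
  shows "(\<integral>\<^sup>+x. ennreal (exp (- (s * x))) \<partial>M) = ennreal (\<integral>x. exp (- (s * x)) \<partial>M)"
proof (rule nn_integral_eq_integral)
  interpret prob_space M by fact
  show "integrable M (\<lambda>x. exp (- (s * x)))"
    using assms(3,4) by (intro integrable_const_bound[where B = 1])
      (auto simp: measurable_cong_sets[OF assms(2) refl] elim!: eventually_mono)
qed auto

lemma ml_law_iff_nn_integral:
  "ml_law \<delta> \<nu> \<mu> \<longleftrightarrow> prob_space \<mu> \<and> sets \<mu> = sets borel \<and> (AE x in \<mu>. 0 \<le> x) \<and>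
     (\<forall>s\<ge>0. (\<integral>\<^sup>+x. ennreal (exp (- (s * x))) \<partial>\<mu>) = ennreal ((1 + s powr \<delta>) powr (- \<nu>)))"
  unfolding ml_law_def
  by (auto simp: nn_integral_exp_neg_eq_integral integral_nonneg_AE)

lemma (in prob_space) nn_integral_indep_var:
  fixes f :: "'b \<Rightarrow> 'b \<Rightarrow> ennreal"
  assumes "indep_var S Y T X" and f: "case_prod f \<in> borel_measurable (S \<Otimes>\<^sub>M T)"
  shows "(\<integral>\<^sup>+\<omega>. f (Y \<omega>) (X \<omega>) \<partial>M) = (\<integral>\<^sup>+y. \<integral>\<^sup>+x. f y x \<partial>distr M T X \<partial>distr M S Y)"
proof -
  have Y: "random_variable S Y" and X: "random_variable T X"
    and joint: "distr M S Y \<Otimes>\<^sub>M distr M T X = distr M (S \<Otimes>\<^sub>M T) (\<lambda>\<omega>. (Y \<omega>, X \<omega>))"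
    using assms(1) by (simp_all add: indep_var_distribution_eq)
  interpret Y: prob_space "distr M S Y" using Y by (rule prob_space_distr)
  interpret X: prob_space "distr M T X" using X by (rule prob_space_distr)
  interpret YX: pair_sigma_finite "distr M S Y" "distr M T X" ..
  have "(\<integral>\<^sup>+\<omega>. f (Y \<omega>) (X \<omega>) \<partial>M) = (\<integral>\<^sup>+p. case_prod f p \<partial>distr M (S \<Otimes>\<^sub>M T) (\<lambda>\<omega>. (Y \<omega>, X \<omega>)))"
    using X Y f by (subst nn_integral_distr) auto
  also have "\<dots> = (\<integral>\<^sup>+p. case_prod f p \<partial>(distr M S Y \<Otimes>\<^sub>M distr M T X))"
    by (simp only: joint)
  also have "\<dots> = (\<integral>\<^sup>+y. \<integral>\<^sup>+x. f y x \<partial>distr M T X \<partial>distr M S Y)"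
    using f by (subst X.nn_integral_fst[symmetric]) auto
  finally show ?thesis .
qed

lemma ml_transform_rescale:
  fixes s z \<delta> :: real
  assumes "0 \<le> s" "0 < \<delta>" "0 < z"
  shows "(1 + (s * z powr (- 1 / \<delta>)) powr \<delta>) powr (- 1) = z / (z + s powr \<delta>)"
proof -
  have scaled: "(s * z powr (- 1 / \<delta>)) powr \<delta> = s powr \<delta> / z"
    using assms by (simp add: powr_mult powr_powr powr_neg_one)
  have "0 < 1 + s powr \<delta> / z"
    using assms by (simp add: add_pos_nonneg)
  then show ?thesis
    unfolding scaled using assms by (simp add: powr_neg_one field_simps)
qed

lemma nn_integral_Z_law_scaled_ml_laplace:
  fixes \<mu> :: "real measure"
  assumes "ml_law \<delta> 1 \<mu>" "0 < \<nu>" "\<nu> \<le> 1" "0 < \<delta>" "0 \<le> s"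
  shows "(\<integral>\<^sup>+z. \<integral>\<^sup>+x. ennreal (exp (- (s * z powr (- 1 / \<delta>) * x))) \<partial>\<mu> \<partial>Z_law \<nu>)
    = ennreal ((1 + s powr \<delta>) powr (- \<nu>))"
proof -
  have "(\<integral>\<^sup>+z. \<integral>\<^sup>+x. ennreal (exp (- (s * z powr (- 1 / \<delta>) * x))) \<partial>\<mu> \<partial>Z_law \<nu>)
      = (\<integral>\<^sup>+z. ennreal (z / (z + s powr \<delta>)) \<partial>Z_law \<nu>)"
  proof (rule nn_integral_cong_AE)
    show "AE z in Z_law \<nu>. (\<integral>\<^sup>+x. ennreal (exp (- (s * z powr (- 1 / \<delta>) * x))) \<partial>\<mu>)
        = ennreal (z / (z + s powr \<delta>))"
      using AE_Z_law_ge_one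
    proof eventually_elim
      case (elim z)
      then show ?case
        using assms(1,4,5) ml_transform_rescale[of s \<delta> z]
        by (simp add: ml_law_iff_nn_integral)
    qed
  qed
  also have "\<dots> = ennreal ((1 + s powr \<delta>) powr (- \<nu>))"
    by (rule nn_integral_Z_law_ratio) (use assms(2,3) in \<open>auto intro: less_le_trans[OF _ powr_ge_zero]\<close>)
  finally show ?thesis .
qed

theorem theorem4:
  fixes \<nu> \<delta> :: real and P :: "'a measure" and Z X :: "'a \<Rightarrow> real"
  assumes "prob_space P"
    and "0 < \<nu>" "\<nu> \<le> 1" "0 < \<delta>" "\<delta> \<le> 1"
    and "Z \<in> borel_measurable P" "X \<in> borel_measurable P"
    and "prob_space.indep_var P borel Z borel X"
    and "distr P borel Z = Z_law \<nu>"
    and "ml_law \<delta> 1 (distr P borel X)"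
  shows "ml_law \<delta> \<nu> (distr P borel (\<lambda>\<omega>. Z \<omega> powr (- 1 / \<delta>) * X \<omega>))"
proof -
  interpret prob_space P by fact
  note [measurable] = assms(6,7)
  have X_nonneg: "AE \<omega> in P. 0 \<le> X \<omega>"
    using assms(10) by (simp add: ml_law_iff_nn_integral AE_distr_iff)
  have "(\<integral>\<^sup>+\<omega>. ennreal (exp (- (s * (Z \<omega> powr (- 1 / \<delta>) * X \<omega>)))) \<partial>P)
      = ennreal ((1 + s powr \<delta>) powr (- \<nu>))" if "0 \<le> s" for s
  proof -
    have "(\<integral>\<^sup>+\<omega>. ennreal (exp (- (s * (Z \<omega> powr (- 1 / \<delta>) * X \<omega>)))) \<partial>P)
        = (\<integral>\<^sup>+z. \<integral>\<^sup>+x. ennreal (exp (- (s * z powr (- 1 / \<delta>) * x))) \<partial>distr P borel X \<partial>Z_law \<nu>)"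
      using nn_integral_indep_var[OF assms(8), where f = "\<lambda>z x. ennreal (exp (- (s * z powr (- 1 / \<delta>) * x)))"]
      by (simp add: assms(9) mult.assoc)
    then show ?thesis
      using nn_integral_Z_law_scaled_ml_laplace[OF assms(10) assms(2-4) that] by simp
  qed
  then show ?thesis
    using X_nonneg
    by (auto simp: ml_law_iff_nn_integral prob_space_distr AE_distr_iff nn_integral_distr elim!: eventually_mono)
qed

end
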